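(* Let $\mathbb{K}=\mathbb{F}_q(\!(X)\!)$ be the field of formal Laurent series over a finite field $\mathbb{F}_q$, and $\mathbb{O}=\mathbb{F}_q[\![X]\!]$. Define $f\colon\mathbb{O}\to\mathbb{K}$ by $f\big(\sum_{k=0}^\infty a_kX^k\big)=\sum_{k=0}^\infty a_kX^{[\frac32 k]}$ ($a_k\in\mathbb{F}_q$), where $[r]$ denotes the integer part of $r\ge0$. Then $f$ is $C^\infty_{Lud}$, but not $C^2_{BGN}$.
   Context: $\mathbb{K}$ carries the absolute value with $|x|=q^{-k}$ for $0\neq x=\sum_k a_kX^k$, where $k$ is minimal with $a_k\neq0$; then $\mathbb{O}$ is an open compact subring. For a topological vector space $E$ over a topological field $\mathbb{K}$, an open $U\subseteq E$ and $g\colon U\to F$: $U^{[1]}=\{(x,y,t)\in U\times E\times\mathbb{K}: x+ty\in U\}$, $U^{]1[}=\{(x,y,t)\in U^{[1]}:t\ne0\}$, $g^{]1[}(x,y,t)=(g(x+ty)-g(x))/t$. $g$ is $C^1_{BGN}$ if continuous and $g^{]1[}$ extends continuously to $g^{[1]}\colon U^{[1]}\to F$; $C^k_{BGN}$ ($k\ge2$) if $C^1_{BGN}$ and $g^{[1]}$ is $C^{k-1}_{BGN}$ (on the open set $U^{[1]}$). Ludkovsky's $C^k$: $\Phi_1(U):=U^{]1[}$, $\overline{\Phi}_1(U):=U^{[1]}$; for $k\ge2$, $\overline{\Phi}_k(U)$ is the set of $(x,\xi_1,\ldots,\xi_k,t_1,\ldots,t_k)\in U\times E^k\times\mathbb{K}^k$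 with both $(x,\xi_1,\ldots,\xi_{k-1},t_1,\ldots,t_{k-1})$ and $(x+t_k\xi_k,\xi_1,\ldots,\xi_{k-1},t_1,\ldots,t_{k-1})$ in $\overline{\Phi}_{k-1}(U)$, and $\Phi_k(U)$ its subset with $t_k\ne0$. $g$ is $C^1_{Lud}$ if it is $C^1_{BGN}$; then $\overline{\Phi}_1(g):=g^{[1]}$. For $k\ge2$, $g$ is $C^k_{Lud}$ if it is $C^{k-1}_{Lud}$ and the map $\Phi_k(g)\colon\Phi_k(U)\to F$, $(x,\xi_1,\ldots,\xi_k,t_1,\ldots,t_k)\mapsto t_k^{-1}\big(\overline{\Phi}_{k-1}(g)(x+t_k\xi_k,\xi_1,\ldots,\xi_{k-1},t_1,\ldots,t_{k-1})-\overline{\Phi}_{k-1}(g)(x,\xi_1,\ldots,\xi_{k-1},t_1,\ldots,t_{k-1})\big)$ has a continuous extension $\overline{\Phi}_k(g)\colon\overline{\Phi}_k(U)\to F$. $C^\infty_{Lud}$ means $C^k_{Lud}$ for all $k\in\mathbb{N}$. *)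

theory Defs
  imports "HOL-Computational_Algebra.Formal_Laurent_Series" "HOL-Library.Cardinality"
begin

text \<open>The field K = F_q((X)) is rendered as the type 'a fls with 'a a finite field
  (q = CARD('a)). Points of K^n are lists of length n. A point of
  E x E x K (E = K^n) is encoded as the list x @ y @ [t].\<close>

definition nv :: "'a::{field,finite} fls \<Rightarrow> real" where
  "nv x = (if x = 0 then 0 else real CARD('a) powr (- real_of_int (fls_subdegree x)))"

definition Oset :: "'a::{field,finite} fls set" where
  "Oset = {x. \<forall>n<0. fls_nth x n = 0}"

definition cont_at :: "'a::{field,finite} fls list set \<Rightarrow> ('a fls list \<Rightarrow> 'a fls) \<Rightarrow> 'a fls list \<Rightarrow> bool" where
  "cont_at S h p \<longleftrightarrow> (\<forall>e>0. \<exists>d>0. \<forall>y\<in>S.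
      (\<forall>i<length p. nv (y!i - p!i) < d) \<longrightarrow> nv (h y - h p) < e)"

definition contin_on :: "'a::{field,finite} fls list set \<Rightarrow> ('a fls list \<Rightarrow> 'a fls) \<Rightarrow> bool" where
  "contin_on S h \<longleftrightarrow> (\<forall>p\<in>S. cont_at S h p)"

definition has_cont_ext :: "'a::{field,finite} fls list set \<Rightarrow> 'a fls list set \<Rightarrow> ('a fls list \<Rightarrow> 'a fls) \<Rightarrow> bool" where
  "has_cont_ext A S h \<longleftrightarrow> (\<exists>H. contin_on S H \<and> (\<forall>p\<in>A. H p = h p))"

definition cont_ext :: "'a::{field,finite} fls list set \<Rightarrow> 'a fls list set \<Rightarrow> ('a fls list \<Rightarrow> 'a fls) \<Rightarrow> ('a fls list \<Rightarrow> 'a fls)" where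
  "cont_ext A S h = (SOME H. contin_on S H \<and> (\<forall>p\<in>A. H p = h p))"

definition vadd :: "'a::{field,finite} fls list \<Rightarrow> 'a fls list \<Rightarrow> 'a fls list" where
  "vadd x y = map2 (+) x y"

definition vsmul :: "'a::{field,finite} fls \<Rightarrow> 'a fls list \<Rightarrow> 'a fls list" where
  "vsmul t y = map ((*) t) y"

subsection \<open>Bertram--Gloeckner--Neeb differentiability\<close>

definition U1 :: "nat \<Rightarrow> 'a::{field,finite} fls list set \<Rightarrow> 'a fls list set" where
  "U1 n U = {x @ y @ [t] | x y t. x \<in> U \<and> length x = n \<and> length y = n \<and> vadd x (vsmul t y) \<in> U}"

definition U1o :: "nat \<Rightarrow> 'a::{field,finite} fls list set \<Rightarrow> 'a fls list set" where
  "U1o n U = {p \<in> U1 n U. p ! (2*n) \<noteq> 0}"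

definition diffq :: "nat \<Rightarrow> ('a::{field,finite} fls list \<Rightarrow> 'a fls) \<Rightarrow> 'a fls list \<Rightarrow> 'a fls" where
  "diffq n g p = (let x = take n p; y = take n (drop n p); t = p ! (2*n)
                  in (g (vadd x (vsmul t y)) - g x) / t)"

definition BGN1 :: "nat \<Rightarrow> 'a::{field,finite} fls list set \<Rightarrow> ('a fls list \<Rightarrow> 'a fls) \<Rightarrow> bool" where
  "BGN1 n U g \<longleftrightarrow> contin_on U g \<and> has_cont_ext (U1o n U) (U1 n U) (diffq n g)"

definition g1 :: "nat \<Rightarrow> 'a::{field,finite} fls list set \<Rightarrow> ('a fls list \<Rightarrow> 'a fls) \<Rightarrow> 'a fls list \<Rightarrow> 'a fls" where
  "g1 n U g = cont_ext (U1o n U) (U1 n U) (diffq n g)"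

fun BGN :: "nat \<Rightarrow> nat \<Rightarrow> 'a::{field,finite} fls list set \<Rightarrow> ('a fls list \<Rightarrow> 'a fls) \<Rightarrow> bool" where
  "BGN 0 n U g = contin_on U g"
| "BGN (Suc 0) n U g = BGN1 n U g"
| "BGN (Suc (Suc k)) n U g = (BGN1 n U g \<and> BGN (Suc k) (2*n+1) (U1 n U) (g1 n U g))"

subsection \<open>Ludkovsky differentiability (for E = F = K)\<close>

text \<open>A point (x, xi_1..xi_k, t_1..t_k) is encoded as the list x # [xi_1..xi_k] @ [t_1..t_k].
  LPhibar U 0 = U (as singleton lists), LPhibar U 1 = U^[1].\<close>
primrec LPhibar :: "'a::{field,finite} fls set \<Rightarrow> nat \<Rightarrow> 'a fls list set" where
  "LPhibar U 0 = {[x] | x. x \<in> U}"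
| "LPhibar U (Suc m) = {x # xs @ [xi] @ ts @ [t] | x xs xi ts t.
      length xs = m \<and> length ts = m \<and>
      x # xs @ ts \<in> LPhibar U m \<and> (x + t * xi) # xs @ ts \<in> LPhibar U m}"

definition LPhi :: "'a::{field,finite} fls set \<Rightarrow> nat \<Rightarrow> 'a fls list set" where
  "LPhi U k = {p \<in> LPhibar U k. last p \<noteq> 0}"

definition Lquot :: "nat \<Rightarrow> ('a::{field,finite} fls list \<Rightarrow> 'a fls) \<Rightarrow> 'a fls list \<Rightarrow> 'a fls" where
  "Lquot m G p = (let x = hd p; xs = take m (tl p); xi = p ! (m+1);
                      ts = take m (drop (m+2) p); t = last p
                  in (G ((x + t * xi) # xs @ ts) - G (x # xs @ ts)) / t)"

primrec LudBar :: "'a::{field,finite} fls set \<Rightarrow> ('a fls \<Rightarrow> 'a fls) \<Rightarrow> nat \<Rightarrow> 'a fls list \<Rightarrow> 'a fls" where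
  "LudBar U g 0 = (\<lambda>p. g (hd p))"
| "LudBar U g (Suc m) = cont_ext (LPhi U (Suc m)) (LPhibar U (Suc m)) (Lquot m (LudBar U g m))"

primrec Lud :: "'a::{field,finite} fls set \<Rightarrow> ('a fls \<Rightarrow> 'a fls) \<Rightarrow> nat \<Rightarrow> bool" where
  "Lud U g 0 = contin_on (LPhibar U 0) (\<lambda>p. g (hd p))"
| "Lud U g (Suc m) = (Lud U g m \<and>
      has_cont_ext (LPhi U (Suc m)) (LPhibar U (Suc m)) (Lquot m (LudBar U g m)))"

definition Lud_inf :: "'a::{field,finite} fls set \<Rightarrow> ('a fls \<Rightarrow> 'a fls) \<Rightarrow> bool" where
  "Lud_inf U g \<longleftrightarrow> (\<forall>k. Lud U g k)"

definition f32 :: "'a::{field,finite} fls \<Rightarrow> 'a fls" where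
  "f32 x = fps_to_fls (Abs_fps (\<lambda>m. if \<exists>k::nat. m = (3*k) div 2
                                       then fls_nth x (int (THE k::nat. m = (3*k) div 2)) else 0))"

end

theory Submission
  imports Defs
begin

text \<open>The map f is additive, so Ludkovsky's first quotient
  (f(x + t\<xi>) - f(x))/t = f(t\<xi>)/t does not depend on x. Since ord f(z) \<ge> [3/2 ord z],
  the quotient f(t\<xi>)/t tends to 0 as t \<rightarrow> 0, so it extends continuously by 0; the second
  quotient, a difference quotient in x alone, then vanishes identically, and so do all higher
  ones. The BGN definition, in contrast, also differences in the variable t: at (0,1,0) in the
  direction (0,0,1) the second quotient is f(s)/s^2, which equals X^(-a) for s = X^(2a) and
  therefore has no continuous extension to s = 0.\<close>

unbundle fps_syntax

section \<open>Valuation bounds on Laurent series\<close>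

definition val_ge :: "'a::zero fls \<Rightarrow> int \<Rightarrow> bool" where
  "val_ge z N \<longleftrightarrow> (\<forall>n<N. z $$ n = 0)"

lemma val_ge_mono: "val_ge z N \<Longrightarrow> M \<le> N \<Longrightarrow> val_ge z M"
  by (auto simp: val_ge_def)

lemma val_ge_0 [simp]: "val_ge 0 N"
  by (auto simp: val_ge_def)

lemma val_ge_add: "val_ge a N \<Longrightarrow> val_ge b N \<Longrightarrow> val_ge (a + b) N"
  by (auto simp: val_ge_def)

lemma val_ge_diff: "val_ge a N \<Longrightarrow> val_ge b N \<Longrightarrow> val_ge (a - b) N"
  by (auto simp: val_ge_def)

lemma val_ge_uminus: "val_ge a N \<Longrightarrow> val_ge (- a) N"
  by (auto simp: val_ge_def)

lemma val_ge_iff: "val_ge z N \<longleftrightarrow> z = 0 \<or> N \<le> fls_subdegree z"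
  unfolding val_ge_def
  by (metis fls_eq0_below_subdegree fls_nonzeroI fls_subdegree_geI linorder_not_le
      order_less_le_trans)

lemma val_ge_subdegree: "val_ge z (fls_subdegree z)"
  by (simp add: val_ge_iff)

lemma val_ge_mult:
  fixes a b :: "'a::field fls"
  shows "val_ge a N \<Longrightarrow> val_ge b M \<Longrightarrow> val_ge (a * b) (N + M)"
  unfolding val_ge_iff by (cases "a = 0"; cases "b = 0") auto

lemma val_ge_inverse: "val_ge (inverse (t::'a::field fls)) (- fls_subdegree t)"
  by (simp add: val_ge_iff)

lemma val_ge_X_power: "M \<le> int k \<Longrightarrow> val_ge (fls_X ^ k :: 'a::field fls) M"
  by (auto simp: val_ge_def)

lemma exists_nonpos_val_ge: "\<exists>L\<le>0. val_ge z L"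
  by (rule exI[of _ "min 0 (fls_subdegree z)"]) (simp add: val_ge_iff)

lemma fls_eq_0_if_val_ge_all: "(\<And>N. val_ge z N) \<Longrightarrow> z = 0"
  unfolding val_ge_def by (meson fls_zero_eqI less_add_one)

lemma Oset_iff_val_ge: "x \<in> Oset \<longleftrightarrow> val_ge x 0"
  by (simp add: Oset_def val_ge_def)

lemma fls_subdegree_stable:
  assumes t: "t \<noteq> 0" and close: "val_ge (t' - t) (fls_subdegree t + 1)"
  shows "t' \<noteq> 0" "fls_subdegree t' = fls_subdegree t"
proof -
  have low: "t' $$ n = t $$ n" if "n \<le> fls_subdegree t" for n
    using close that by (simp add: val_ge_def)
  have nz: "t' $$ fls_subdegree t \<noteq> 0" using t low[of "fls_subdegree t"] by simp
  then show "t' \<noteq> 0" by auto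
  show "fls_subdegree t' = fls_subdegree t" by (rule fls_subdegree_eqI[OF nz]) (simp add: low)
qed

section \<open>Continuity in terms of valuations\<close>

lemma card_ge_2: "CARD('a::{field,finite}) \<ge> 2"
proof -
  have "card {0::'a, 1} \<le> CARD('a)" by (rule card_mono) auto
  then show ?thesis by simp
qed

lemma card_powr_pos: "real CARD('a::{field,finite}) powr x > 0"
  using card_ge_2[where 'a='a] by simp

lemma nv_le_if_val_ge:
  "val_ge (z::'a::{field,finite} fls) N \<Longrightarrow> nv z \<le> real CARD('a) powr (- of_int N)"
  using card_ge_2[where 'a='a] by (auto simp: nv_def val_ge_iff)

lemma val_ge_if_nv_less:
  assumes "nv (z::'a::{field,finite} fls) < real CARD('a) powr (- of_int N)"
  shows "val_ge z (N + 1)"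
proof (cases "z = 0")
  case False
  have q: "real CARD('a) > 1" using card_ge_2[where 'a='a] by linarith
  have "real CARD('a) powr (- of_int (fls_subdegree z)) < real CARD('a) powr (- of_int N)"
    using assms False by (simp add: nv_def)
  then have "N < fls_subdegree z" using q by (simp add: powr_less_cancel_iff)
  then show ?thesis by (simp add: val_ge_iff)
qed simp

lemma exists_card_powr_less: "d > 0 \<Longrightarrow> \<exists>M::int. real CARD('a::{field,finite}) powr (- of_int M) < d"
proof -
  assume d: "d > 0"
  have q: "real CARD('a) > 1" using card_ge_2[where 'a='a] by linarith
  then have "inverse (real CARD('a)) < 1" by (simp add: inverse_less_1_iff)
  then obtain n where n: "inverse (real CARD('a)) ^ n < d" using real_arch_pow_inv d by blast
  have "real CARD('a) powr (- of_int (int n)) = inverse (real CARD('a)) ^ n"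
    using q by (simp add: powr_minus powr_realpow power_inverse)
  then show ?thesis using n by metis
qed

lemma val_ge_if_cont_at:
  assumes c: "cont_at S h (p::'a::{field,finite} fls list)"
  shows "\<exists>M. \<forall>y\<in>S. (\<forall>i<length p. val_ge (y!i - p!i) M) \<longrightarrow> val_ge (h y - h p) N"
proof -
  obtain d where d: "d > 0" "\<forall>y\<in>S. (\<forall>i<length p. nv (y!i - p!i) < d) \<longrightarrow>
      nv (h y - h p) < real CARD('a) powr (- of_int (N - 1))"
    using c card_powr_pos[where 'a='a] unfolding cont_at_def by meson
  obtain M :: int where M: "real CARD('a) powr (- of_int M) < d"
    using exists_card_powr_less d(1) by blast
  have "val_ge (h y - h p) N" if y: "y \<in> S" "\<forall>i<length p. val_ge (y!i - p!i) M" for y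
  proof -
    have "\<forall>i<length p. nv (y!i - p!i) < d"
      using y(2) nv_le_if_val_ge M by (meson order_le_less_trans)
    then have "nv (h y - h p) < real CARD('a) powr (- of_int (N - 1))" using d(2) y(1) by blast
    then show ?thesis using val_ge_if_nv_less by fastforce
  qed
  then show ?thesis by blast
qed

lemma cont_at_if_val_ge:
  assumes c: "\<And>N. \<exists>M. \<forall>y\<in>S. (\<forall>i<length p. val_ge (y!i - p!i) M) \<longrightarrow> val_ge (h y - h p) N"
  shows "cont_at S h (p::'a::{field,finite} fls list)"
  unfolding cont_at_def
proof (intro allI impI)
  fix e :: real assume e: "e > 0"
  obtain N :: int where N: "real CARD('a) powr (- of_int N) < e"
    using exists_card_powr_less e by blast
  obtain M where M: "\<forall>y\<in>S. (\<forall>i<length p. val_ge (y!i - p!i) M) \<longrightarrow> val_ge (h y - h p) N"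
    using c by blast
  have "nv (h y - h p) < e"
    if y: "y \<in> S" "\<forall>i<length p. nv (y!i - p!i) < real CARD('a) powr (- of_int (M - 1))" for y
  proof -
    have "\<forall>i<length p. val_ge (y!i - p!i) M" using y(2) val_ge_if_nv_less by fastforce
    then show ?thesis using M y(1) nv_le_if_val_ge N by (meson order_le_less_trans)
  qed
  then show "\<exists>d>0. \<forall>y\<in>S. (\<forall>i<length p. nv (y!i - p!i) < d) \<longrightarrow> nv (h y - h p) < e"
    using card_powr_pos by blast
qed

lemma cont_at_iff_val_ge:
  "cont_at S h (p::'a::{field,finite} fls list) \<longleftrightarrow>
   (\<forall>N. \<exists>M. \<forall>y\<in>S. (\<forall>i<length p. val_ge (y!i - p!i) M) \<longrightarrow> val_ge (h y - h p) N)"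
  using val_ge_if_cont_at cont_at_if_val_ge by blast

lemma cont_at_snoc_X_power:
  fixes h :: "'a::{field,finite} fls list \<Rightarrow> 'a fls"
  assumes cont: "cont_at S h (P @ [0])" and mem: "\<And>k. K \<le> k \<Longrightarrow> P @ [fls_X ^ k] \<in> S"
  shows "\<exists>k0. \<forall>k\<ge>k0. val_ge (h (P @ [fls_X ^ k]) - h (P @ [0])) N"
proof -
  obtain M where M: "\<forall>y\<in>S. (\<forall>i<length (P @ [0]). val_ge (y!i - (P @ [0])!i) M) \<longrightarrow>
      val_ge (h y - h (P @ [0])) N"
    using cont unfolding cont_at_iff_val_ge by blast
  have "val_ge (h (P @ [fls_X ^ k]) - h (P @ [0])) N" if k: "max K (nat M) \<le> k" for k
  proof -
    have "val_ge (fls_X ^ k :: 'a fls) M" using k by (intro val_ge_X_power) linarith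
    then have "val_ge ((P @ [fls_X ^ k]) ! i - (P @ [0]) ! i) M" if "i < length (P @ [0])" for i
      using that by (cases "i < length P") (auto simp: nth_append)
    then show ?thesis using M mem k by simp
  qed
  then show ?thesis by blast
qed

lemma has_cont_ext_cont_ext:
  "has_cont_ext A S h \<Longrightarrow> contin_on S (cont_ext A S h) \<and> (\<forall>p\<in>A. cont_ext A S h p = h p)"
  unfolding has_cont_ext_def cont_ext_def
  by (rule someI_ex[of "\<lambda>H. contin_on S H \<and> (\<forall>p\<in>A. H p = h p)"])

lemma contin_on_const_0: "contin_on S (\<lambda>p. 0 :: 'a::{field,finite} fls)"
  unfolding contin_on_def cont_at_iff_val_ge by simp

lemma strict_mono_three_halves: "strict_mono (\<lambda>k::nat. (3*k) div 2)"
proof (rule strict_monoI)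
  fix k k' :: nat assume "k < k'"
  then have "(3*k + 2) div 2 \<le> (3*k') div 2" by (intro div_le_mono) simp
  then show "(3*k) div 2 < (3*k') div 2" by simp
qed

lemma f32_nth_three_halves: "f32 x $$ int ((3*k) div 2) = x $$ int k"
proof -
  have "(THE k'::nat. (3*k) div 2 = (3*k') div 2) = k"
    using strict_mono_eq[OF strict_mono_three_halves] by auto
  then show ?thesis by (auto simp: f32_def)
qed

lemma f32_nth_eq_0:
  assumes "\<And>k::nat. m \<noteq> int ((3*k) div 2)"
  shows "f32 x $$ m = 0"
proof -
  have "nat m \<noteq> (3*k) div 2" if "0 \<le> m" for k
    using assms[of k] that by linarith
  then show ?thesis by (auto simp: f32_def)
qed

lemma f32_nth_cases:
  obtains k where "m = int ((3*k) div 2)" "f32 x $$ m = x $$ int k"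
  | "f32 x $$ m = 0"
proof (cases "\<exists>k::nat. m = int ((3*k) div 2)")
  case True
  then show ?thesis using that(1) f32_nth_three_halves by blast
qed (use that(2) f32_nth_eq_0 in blast)

lemma additive_f32: "additive f32"
proof
  fix a b :: "'a fls"
  show "f32 (a + b) = f32 a + f32 b"
  proof (rule fls_eqI)
    fix m
    show "f32 (a + b) $$ m = (f32 a + f32 b) $$ m"
      by (cases "\<exists>k::nat. m = int ((3*k) div 2)") (auto simp: f32_nth_three_halves f32_nth_eq_0)
  qed
qed

lemma val_ge_f32_0: "val_ge (f32 x) 0"
  unfolding val_ge_def by (auto intro: f32_nth_eq_0)

lemma val_ge_f32_three_halves: "val_ge x (int n) \<Longrightarrow> val_ge (f32 x) (int ((3*n) div 2))"
  unfolding val_ge_def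
proof (intro allI impI)
  fix m assume x: "\<forall>m<int n. x $$ m = 0" and m: "m < int ((3*n) div 2)"
  show "f32 x $$ m = 0"
  proof (cases m x rule: f32_nth_cases)
    case (1 k)
    then have "k < n" using m strict_mono_less[OF strict_mono_three_halves, of k n] by simp
    then show ?thesis using 1 x by simp
  qed
qed

lemma val_ge_f32: "val_ge x N \<Longrightarrow> val_ge (f32 x) N"
proof (cases "N \<le> 0")
  case False
  assume "val_ge x N"
  then have "val_ge (f32 x) (int ((3 * nat N) div 2))"
    using False by (intro val_ge_f32_three_halves) simp
  then show ?thesis by (rule val_ge_mono) simp
qed (use val_ge_f32_0 val_ge_mono in blast)

lemma f32_X_power: "f32 (fls_X ^ k :: 'a::{field,finite} fls) = fls_X ^ ((3*k) div 2)"
proof (rule fls_eqI)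
  fix m show "f32 (fls_X ^ k :: 'a fls) $$ m = fls_X ^ ((3*k) div 2) $$ m"
    using strict_mono_eq[OF strict_mono_three_halves]
    by (cases m "fls_X ^ k :: 'a fls" rule: f32_nth_cases) (auto simp: f32_nth_three_halves)
qed

lemma contin_on_f32_hd: "contin_on (LPhibar Oset 0) (\<lambda>p. f32 (hd p) :: 'a::{field,finite} fls)"
  unfolding contin_on_def cont_at_iff_val_ge
proof (intro ballI allI)
  fix p :: "'a fls list" and N
  assume "p \<in> LPhibar Oset 0"
  have "val_ge (f32 (hd y) - f32 (hd p)) N"
    if "y \<in> LPhibar Oset 0" "\<forall>i<length p. val_ge (y!i - p!i) N" for y
    using that \<open>p \<in> LPhibar Oset 0\<close>
    by (auto simp: additive.diff[OF additive_f32, symmetric] intro: val_ge_f32)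
  then show "\<exists>M. \<forall>y\<in>LPhibar Oset 0. (\<forall>i<length p. val_ge (y!i - p!i) M) \<longrightarrow>
      val_ge (f32 (hd y) - f32 (hd p)) N"
    by blast
qed

section \<open>The first Ludkovsky quotient of f\<close>

definition dquot :: "('a::field fls \<Rightarrow> 'a fls) \<Rightarrow> 'a fls \<Rightarrow> 'a fls \<Rightarrow> 'a fls" where
  "dquot g \<xi> t = (if t = 0 then 0 else g (t * \<xi>) / t)"

lemma dquot_f32_cont_at_nonzero:
  fixes t \<xi> :: "'a::{field,finite} fls"
  assumes t: "t \<noteq> 0"
  shows "\<exists>M. \<forall>\<xi>' t'. val_ge (\<xi>' - \<xi>) M \<longrightarrow> val_ge (t' - t) M \<longrightarrow>
           val_ge (dquot f32 \<xi>' t' - dquot f32 \<xi> t) N"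
proof -
  define j where "j = fls_subdegree t"
  obtain L where L: "L \<le> 0" "val_ge \<xi> L" using exists_nonpos_val_ge by blast
  define M where "M = \<bar>N\<bar> + 2*\<bar>j\<bar> + \<bar>L\<bar> + 1"
  have M: "j + 1 \<le> M" "L \<le> M" "N \<le> M + min L j - j" "N \<le> M - 2 * j"
    using L(1) unfolding M_def by linarith+
  have "val_ge (dquot f32 \<xi>' t' - dquot f32 \<xi> t) N"
    if \<xi>': "val_ge (\<xi>' - \<xi>) M" and t': "val_ge (t' - t) M" for \<xi>' t'
  proof -
    have "val_ge (t' - t) (fls_subdegree t + 1)" using t' M(1) j_def by (auto intro: val_ge_mono)
    note t'_props = fls_subdegree_stable[OF t this]
    have "val_ge \<xi>' L"
      using val_ge_add[OF val_ge_mono[OF \<xi>' M(2)] L(2)] by simp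
    then have "val_ge ((t' - t) * \<xi>') (M + L)" by (rule val_ge_mult[OF t'])
    then have d1: "val_ge ((t' - t) * \<xi>') (M + min L j)" by (rule val_ge_mono) simp
    have "val_ge (t * (\<xi>' - \<xi>)) (j + M)" unfolding j_def by (rule val_ge_mult[OF val_ge_subdegree \<xi>'])
    then have d2: "val_ge (t * (\<xi>' - \<xi>)) (M + min L j)" by (rule val_ge_mono) simp
    have "t' * \<xi>' - t * \<xi> = (t' - t) * \<xi>' + t * (\<xi>' - \<xi>)" by (simp add: algebra_simps)
    then have "val_ge (t' * \<xi>' - t * \<xi>) (M + min L j)" using val_ge_add[OF d1 d2] by simp
    then have "val_ge (f32 (t' * \<xi>' - t * \<xi>) * inverse t') (M + min L j + - j)"
      using val_ge_mult[OF val_ge_f32 val_ge_inverse[of t']] t'_props(2) j_def by simp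
    then have A: "val_ge (f32 (t' * \<xi>' - t * \<xi>) * inverse t') N"
      by (rule val_ge_mono) (use M(3) in simp)
    have "val_ge (f32 (t * \<xi>) * (- (t' - t) * (inverse t * inverse t'))) (0 + (M + (- j + - j)))"
      using val_ge_mult[OF val_ge_f32_0 val_ge_mult[OF val_ge_uminus[OF t']
            val_ge_mult[OF val_ge_inverse[of t] val_ge_inverse[of t']]]] t'_props j_def
      by simp
    then have B: "val_ge (f32 (t * \<xi>) * (- (t' - t) * (inverse t * inverse t'))) N"
      by (rule val_ge_mono) (use M(4) in simp)
    have "dquot f32 \<xi>' t' - dquot f32 \<xi> t =
        f32 (t' * \<xi>' - t * \<xi>) * inverse t' + f32 (t * \<xi>) * (- (t' - t) * (inverse t * inverse t'))"
      using t t'_props(1) by (simp add: dquot_def additive.diff[OF additive_f32] field_simps)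
    then show ?thesis using val_ge_add[OF A B] by simp
  qed
  then show ?thesis by blast
qed

lemma dquot_f32_cont_at_zero:
  fixes \<xi> :: "'a::{field,finite} fls"
  shows "\<exists>M. \<forall>\<xi>' t'. val_ge (\<xi>' - \<xi>) M \<longrightarrow> val_ge t' M \<longrightarrow> val_ge (dquot f32 \<xi>' t') N"
proof -
  obtain L where L: "L \<le> 0" "val_ge \<xi> L" using exists_nonpos_val_ge by blast
  define M where "M = 2*\<bar>N\<bar> + 3*\<bar>L\<bar> + 2"
  have M: "L \<le> M" "0 \<le> M + L" "2 * N + 1 \<le> M + 3 * L - 1"
    using L(1) unfolding M_def by linarith+
  have "val_ge (dquot f32 \<xi>' t') N"
    if \<xi>': "val_ge (\<xi>' - \<xi>) M" and t': "val_ge t' M" and nz: "t' \<noteq> 0" for \<xi>' t'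
  proof -
    define j where "j = fls_subdegree t'"
    define n where "n = nat (j + L)"
    have "M \<le> j" using t' nz val_ge_iff j_def by auto
    then have n: "int n = j + L" using M(2) n_def by linarith
    have "val_ge \<xi>' L"
      using val_ge_add[OF val_ge_mono[OF \<xi>' M(1)] L(2)] by simp
    then have "val_ge (t' * \<xi>') (int n)"
      using val_ge_mult[OF val_ge_subdegree[of t']] n j_def by simp
    then have "val_ge (f32 (t' * \<xi>') * inverse t') (int ((3*n) div 2) - j)"
      using val_ge_mult[OF val_ge_f32_three_halves val_ge_inverse[of t']] j_def by simp
    moreover have "N \<le> int ((3*n) div 2) - j"
      using n \<open>M \<le> j\<close> M(3) by linarith
    ultimately have "val_ge (f32 (t' * \<xi>') * inverse t') N" by (rule val_ge_mono)
    then show ?thesis using nz by (simp add: dquot_def divide_inverse)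
  qed
  then show ?thesis by (metis dquot_def val_ge_0)
qed

lemma dquot_f32_cont_at:
  fixes t \<xi> :: "'a::{field,finite} fls"
  shows "\<exists>M. \<forall>\<xi>' t'. val_ge (\<xi>' - \<xi>) M \<longrightarrow> val_ge (t' - t) M \<longrightarrow>
           val_ge (dquot f32 \<xi>' t' - dquot f32 \<xi> t) N"
proof (cases "t = 0")
  case True
  then have "dquot f32 \<xi> t = 0" by (simp add: dquot_def)
  then show ?thesis using dquot_f32_cont_at_zero[of \<xi> N] True by simp
qed (rule dquot_f32_cont_at_nonzero)

lemma LPhibar_one_iff:
  "p \<in> LPhibar U (Suc 0) \<longleftrightarrow> (\<exists>x \<xi> t. p = [x, \<xi>, t] \<and> x \<in> U \<and> x + t * \<xi> \<in> U)"
  by auto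

lemma contin_on_dquot_f32:
  "contin_on (LPhibar Oset (Suc 0)) (\<lambda>p. dquot f32 (p!1) (p!2) :: 'a::{field,finite} fls)"
  unfolding contin_on_def cont_at_iff_val_ge
proof (intro ballI allI)
  fix p :: "'a fls list" and N
  assume "p \<in> LPhibar Oset (Suc 0)"
  then obtain x \<xi> t where p: "p = [x, \<xi>, t]" unfolding LPhibar_one_iff by blast
  obtain M where M: "\<forall>\<xi>' t'. val_ge (\<xi>' - \<xi>) M \<longrightarrow> val_ge (t' - t) M \<longrightarrow>
      val_ge (dquot f32 \<xi>' t' - dquot f32 \<xi> t) N"
    using dquot_f32_cont_at by blast
  have "val_ge (dquot f32 (y!1) (y!2) - dquot f32 (p!1) (p!2)) N"
    if y: "y \<in> LPhibar Oset (Suc 0)" and close: "\<forall>i<length p. val_ge (y!i - p!i) M" for y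
  proof -
    obtain x' \<xi>' t' where y': "y = [x', \<xi>', t']" using y unfolding LPhibar_one_iff by blast
    have "val_ge (\<xi>' - \<xi>) M" "val_ge (t' - t) M"
      using close[rule_format, of 1] close[rule_format, of 2] p y' by simp_all
    then show ?thesis using M p y' by simp
  qed
  then show "\<exists>M. \<forall>y\<in>LPhibar Oset (Suc 0). (\<forall>i<length p. val_ge (y!i - p!i) M) \<longrightarrow>
      val_ge (dquot f32 (y!1) (y!2) - dquot f32 (p!1) (p!2)) N"
    by blast
qed

section \<open>Ludkovsky smoothness of additive maps\<close>

declare LPhibar.simps(2) [simp del]

lemma LPhibar_Suc_iff:
  "p \<in> LPhibar U (Suc m) \<longleftrightarrow> (\<exists>x xs \<xi> ts t. p = x # xs @ [\<xi>] @ ts @ [t] \<and>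
     length xs = m \<and> length ts = m \<and> x # xs @ ts \<in> LPhibar U m \<and> (x + t * \<xi>) # xs @ ts \<in> LPhibar U m)"
  by (simp add: LPhibar.simps(2))

lemma Lquot_eq:
  "length xs = m \<Longrightarrow> length ts = m \<Longrightarrow>
   Lquot m G (x # xs @ \<xi> # ts @ [t]) = (G ((x + t * \<xi>) # xs @ ts) - G (x # xs @ ts)) / t"
  unfolding Lquot_def Let_def by (simp add: nth_append)

lemma LPhibar_Oset_translate:
  "p \<in> LPhibar Oset m \<Longrightarrow> h \<in> Oset \<Longrightarrow> (hd p + h) # tl p \<in> LPhibar Oset m"
proof (induction m arbitrary: p)
  case 0
  then show ?case by (auto simp: Oset_iff_val_ge val_ge_add)
next
  case (Suc m)
  from Suc.prems(1) obtain x xs \<xi> ts t where p: "p = x # xs @ [\<xi>] @ ts @ [t]"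
    "length xs = m" "length ts = m" "x # xs @ ts \<in> LPhibar Oset m"
    "(x + t * \<xi>) # xs @ ts \<in> LPhibar Oset m"
    unfolding LPhibar_Suc_iff by blast
  have "(x + h) # xs @ ts \<in> LPhibar Oset m" "(x + h + t * \<xi>) # xs @ ts \<in> LPhibar Oset m"
    using Suc.IH[OF p(4) Suc.prems(2)] Suc.IH[OF p(5) Suc.prems(2)] by (simp_all add: ac_simps)
  then show ?case unfolding LPhibar_Suc_iff using p(1-3) by fastforce
qed

text \<open>Points with last coordinate t = 0 are limits of points of LPhi with t = X^k, so a
  continuous extension from LPhi to LPhibar is unique.\<close>
lemma LPhibar_Oset_cont_ext_unique:
  fixes H G :: "'a::{field,finite} fls list \<Rightarrow> 'a fls"
  assumes H: "contin_on (LPhibar Oset (Suc m)) H" and G: "contin_on (LPhibar Oset (Suc m)) G"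
    and eq: "\<forall>q\<in>LPhi Oset (Suc m). H q = G q" and p: "p \<in> LPhibar Oset (Suc m)"
  shows "H p = G p"
proof (cases "last p = 0")
  case False
  then show ?thesis using eq p by (simp add: LPhi_def)
next
  case True
  from p obtain x xs \<xi> ts where pp: "p = (x # xs @ [\<xi>] @ ts) @ [0]"
    "length xs = m" "length ts = m" "x # xs @ ts \<in> LPhibar Oset m"
    unfolding LPhibar_Suc_iff using True by fastforce
  define P where "P = x # xs @ [\<xi>] @ ts"
  obtain L where L: "L \<le> 0" "val_ge \<xi> L" using exists_nonpos_val_ge by blast
  have mem: "P @ [fls_X ^ k] \<in> LPhi Oset (Suc m)" if k: "nat (- L) \<le> k" for k
  proof -
    have "fls_X ^ k * \<xi> \<in> Oset"
      using L k by (simp add: Oset_iff_val_ge val_ge_def fls_X_power_times_conv_shift)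
    then have "(x + fls_X ^ k * \<xi>) # xs @ ts \<in> LPhibar Oset m"
      using LPhibar_Oset_translate[OF pp(4)] by fastforce
    then show ?thesis unfolding LPhi_def LPhibar_Suc_iff P_def using pp(2-4) by fastforce
  qed
  then have memS: "P @ [fls_X ^ k] \<in> LPhibar Oset (Suc m)" if "nat (- L) \<le> k" for k
    using that by (simp add: LPhi_def)
  have "val_ge (H p - G p) N" for N
  proof -
    obtain k1 where k1: "\<forall>k\<ge>k1. val_ge (H (P @ [fls_X ^ k]) - H p) N"
      using cont_at_snoc_X_power[OF _ memS] H p pp(1) unfolding contin_on_def P_def by metis
    obtain k2 where k2: "\<forall>k\<ge>k2. val_ge (G (P @ [fls_X ^ k]) - G p) N"
      using cont_at_snoc_X_power[OF _ memS] G p pp(1) unfolding contin_on_def P_def by metis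
    define k where "k = max (nat (- L)) (max k1 k2)"
    have "H (P @ [fls_X ^ k]) = G (P @ [fls_X ^ k])" using eq mem k_def by simp
    then show ?thesis
      using val_ge_diff[OF k2[rule_format, of k] k1[rule_format, of k]] k_def by simp
  qed
  then show ?thesis using fls_eq_0_if_val_ge_all[of "H p - G p"] by simp
qed

fun LudBar_additive :: "('a::field fls \<Rightarrow> 'a fls) \<Rightarrow> nat \<Rightarrow> 'a fls list \<Rightarrow> 'a fls" where
  "LudBar_additive g 0 = (\<lambda>p. g (hd p))"
| "LudBar_additive g (Suc 0) = (\<lambda>p. dquot g (p!1) (p!2))"
| "LudBar_additive g (Suc (Suc m)) = (\<lambda>p. 0)"

lemma Lquot_LudBar_additive:
  assumes g: "additive g" and p: "p \<in> LPhi U (Suc m)"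
  shows "Lquot m (LudBar_additive g m) p = LudBar_additive g (Suc m) p"
proof -
  from p obtain x xs \<xi> ts t where pp: "p = x # xs @ \<xi> # ts @ [t]" "length xs = m" "length ts = m"
    "t \<noteq> 0"
    unfolding LPhi_def LPhibar_Suc_iff by auto
  consider "m = 0" | "m = Suc 0" | m' where "m = Suc (Suc m')"
    by (metis not0_implies_Suc)
  then show ?thesis
  proof cases
    case 1
    then show ?thesis using pp by (simp add: Lquot_def dquot_def additive.add[OF g])
  next
    case 2
    then obtain a b where "xs = [a]" "ts = [b]" using pp by (auto simp: length_Suc_conv)
    then show ?thesis using pp 2 by (simp add: Lquot_def)
  next
    case 3
    then show ?thesis using pp by (simp add: Lquot_eq)
  qed
qed

lemma LudBar_Oset_additive:
  fixes g :: "'a::{field,finite} fls \<Rightarrow> 'a fls"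
  assumes g: "additive g"
    and cont0: "contin_on (LPhibar Oset 0) (\<lambda>p. g (hd p))"
    and cont1: "contin_on (LPhibar Oset (Suc 0)) (\<lambda>p. dquot g (p!1) (p!2))"
  shows "(\<forall>p\<in>LPhibar Oset m. LudBar Oset g m p = LudBar_additive g m p) \<and> Lud Oset g m"
proof (induction m)
  case 0
  show ?case using cont0 by simp
next
  case (Suc m)
  have quot: "\<forall>p\<in>LPhi Oset (Suc m). Lquot m (LudBar Oset g m) p = LudBar_additive g (Suc m) p"
  proof
    fix p :: "'a fls list" assume p: "p \<in> LPhi Oset (Suc m)"
    then obtain x xs \<xi> ts t where pp: "p = x # xs @ \<xi> # ts @ [t]" "length xs = m" "length ts = m"
      "x # xs @ ts \<in> LPhibar Oset m" "(x + t * \<xi>) # xs @ ts \<in> LPhibar Oset m"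
      unfolding LPhi_def LPhibar_Suc_iff by auto
    then have "Lquot m (LudBar Oset g m) p = Lquot m (LudBar_additive g m) p"
      using Suc.IH by (simp add: Lquot_eq)
    also have "\<dots> = LudBar_additive g (Suc m) p" by (rule Lquot_LudBar_additive[OF g p])
    finally show "Lquot m (LudBar Oset g m) p = LudBar_additive g (Suc m) p" .
  qed
  have cont: "contin_on (LPhibar Oset (Suc m)) (LudBar_additive g (Suc m))"
    using cont1 contin_on_const_0 by (cases m) auto
  then have ext: "has_cont_ext (LPhi Oset (Suc m)) (LPhibar Oset (Suc m)) (Lquot m (LudBar Oset g m))"
    unfolding has_cont_ext_def using quot by metis
  note LudBar_props = has_cont_ext_cont_ext[OF ext, folded LudBar.simps]
  have "\<forall>p\<in>LPhibar Oset (Suc m). LudBar Oset g (Suc m) p = LudBar_additive g (Suc m) p"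
    using LPhibar_Oset_cont_ext_unique[OF conjunct1[OF LudBar_props] cont] LudBar_props quot
    by simp
  then show ?case using Suc.IH ext by simp
qed

lemma Lud_inf_Oset_additive:
  fixes g :: "'a::{field,finite} fls \<Rightarrow> 'a fls"
  assumes "additive g"
    and "contin_on (LPhibar Oset 0) (\<lambda>p. g (hd p))"
    and "contin_on (LPhibar Oset (Suc 0)) (\<lambda>p. dquot g (p!1) (p!2))"
  shows "Lud_inf Oset g"
  unfolding Lud_inf_def using LudBar_Oset_additive[OF assms] by blast

section \<open>Failure of BGN smoothness\<close>

lemma U1_memI:
  "x \<in> U \<Longrightarrow> length x = n \<Longrightarrow> length y = n \<Longrightarrow> vadd x (vsmul t y) \<in> U \<Longrightarrow> x @ y @ [t] \<in> U1 n U"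
  unfolding U1_def by blast

lemma U1_Oset_mem:
  fixes s :: "'a::{field,finite} fls"
  assumes "s \<in> Oset"
  shows "[0, 1, s] \<in> U1 1 {[x] | x. x \<in> Oset}"
  using U1_memI[of "[0]" _ 1 "[1]" s] assms by (simp add: vadd_def vsmul_def Oset_def)

lemma U1_U1_Oset_mem:
  fixes s :: "'a::{field,finite} fls"
  assumes "s \<in> Oset"
  shows "[0, 1, 0, 0, 0, 1, s] \<in> U1 3 (U1 1 {[x] | x. x \<in> Oset})"
  using U1_memI[of "[0, 1, 0]" _ 3 "[0, 0, 1]" s] U1_Oset_mem[OF assms] U1_Oset_mem[of 0]
  by (simp add: vadd_def vsmul_def Oset_def)

lemma fls_X_power_in_Oset: "fls_X ^ k \<in> Oset"
  by (simp add: Oset_iff_val_ge val_ge_X_power)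

lemma BGN1_f32_ext_values:
  fixes G :: "'a::{field,finite} fls list \<Rightarrow> 'a fls"
  defines "U \<equiv> {[x] | x. x \<in> Oset}"
  assumes cont: "contin_on (U1 1 U) G" and ext: "\<forall>p\<in>U1o 1 U. G p = diffq 1 (\<lambda>p. f32 (hd p)) p"
  shows "G [0, 1, fls_X ^ (2*a)] = fls_X ^ a" and "G [0, 1, 0] = 0"
proof -
  have quot: "G [0, 1, fls_X ^ k] = f32 (fls_X ^ k) / fls_X ^ k" for k
  proof -
    have "[0, 1, fls_X ^ k] \<in> U1o 1 U"
      using U1_Oset_mem[OF fls_X_power_in_Oset, of k] by (simp add: U1o_def U_def)
    then have "G [0, 1, fls_X ^ k] = diffq 1 (\<lambda>p. f32 (hd p)) [0, 1, fls_X ^ k]"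
      using ext by blast
    then show ?thesis by (simp add: diffq_def vadd_def vsmul_def additive.zero[OF additive_f32])
  qed
  show X: "G [0, 1, fls_X ^ (2*a)] = fls_X ^ a" for a
  proof -
    have "G [0, 1, fls_X ^ (2*a)] = f32 (fls_X ^ (2*a)) / fls_X ^ (2*a)" by (rule quot)
    also have "f32 (fls_X ^ (2*a)) = fls_X ^ a * (fls_X ^ (2*a) :: 'a fls)"
      by (simp add: f32_X_power flip: power_add)
    also have "fls_X ^ a * fls_X ^ (2*a) / fls_X ^ (2*a) = (fls_X ^ a :: 'a fls)"
      by (rule nonzero_mult_div_cancel_right) simp
    finally show ?thesis .
  qed
  have "[0, 1] @ [0] \<in> U1 1 U" using U1_Oset_mem[of 0] by (simp add: U_def Oset_iff_val_ge)
  then have G_cont: "cont_at (U1 1 U) G ([0, 1] @ [0])" using cont unfolding contin_on_def by blast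
  have G_mem: "[0, 1] @ [fls_X ^ k] \<in> U1 1 U" for k
    using U1_Oset_mem[OF fls_X_power_in_Oset] by (simp add: U_def)
  have "val_ge (G [0, 1, 0]) N" for N
  proof -
    obtain k0 where k0: "\<forall>k\<ge>k0. val_ge (G ([0, 1] @ [fls_X ^ k]) - G ([0, 1] @ [0])) N"
      using cont_at_snoc_X_power[OF G_cont G_mem] by blast
    define a where "a = k0 + nat N"
    have "val_ge (G [0, 1, fls_X ^ (2*a)] - G [0, 1, 0]) N" using k0 a_def by simp
    moreover have "val_ge (G [0, 1, fls_X ^ (2*a)]) N"
      unfolding X by (rule val_ge_X_power) (simp add: a_def)
    ultimately show ?thesis using val_ge_diff by fastforce
  qed
  then show "G [0, 1, 0] = 0" by (rule fls_eq_0_if_val_ge_all)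
qed

lemma BGN2_f32_ext_discontinuous:
  fixes G H :: "'a::{field,finite} fls list \<Rightarrow> 'a fls"
  defines "U \<equiv> {[x] | x. x \<in> Oset}"
  assumes G_cont: "contin_on (U1 1 U) G"
    and G_ext: "\<forall>p\<in>U1o 1 U. G p = diffq 1 (\<lambda>p. f32 (hd p)) p"
    and H_ext: "\<forall>p\<in>U1o 3 (U1 1 U). H p = diffq 3 G p"
  shows "\<not> contin_on (U1 3 (U1 1 U)) H"
proof
  assume H_cont: "contin_on (U1 3 (U1 1 U)) H"
  note G_values = BGN1_f32_ext_values[OF G_cont[unfolded U_def] G_ext[unfolded U_def]]
  let ?P = "[0, 1, 0, 0, 0, 1] :: 'a fls list"
  have H_X: "H (?P @ [fls_X ^ (2*a)]) $$ n = (if n = - int a then 1 else 0)" for a n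
  proof -
    have "?P @ [fls_X ^ (2*a)] \<in> U1o 3 (U1 1 U)"
      using U1_U1_Oset_mem[OF fls_X_power_in_Oset, of "2*a"] by (simp add: U1o_def U_def)
    then have "H (?P @ [fls_X ^ (2*a)]) = diffq 3 G (?P @ [fls_X ^ (2*a)])"
      using H_ext by blast
    also have "\<dots> = fls_X ^ a / fls_X ^ (2*a)"
      by (simp add: diffq_def vadd_def vsmul_def numeral_3_eq_3 G_values)
    finally show ?thesis by simp
  qed
  have "?P @ [0] \<in> U1 3 (U1 1 U)" using U1_U1_Oset_mem[of 0] by (simp add: U_def Oset_iff_val_ge)
  then have H_cont_0: "cont_at (U1 3 (U1 1 U)) H (?P @ [0])"
    using H_cont unfolding contin_on_def by blast
  have H_mem: "?P @ [fls_X ^ k] \<in> U1 3 (U1 1 U)" for k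
    using U1_U1_Oset_mem[OF fls_X_power_in_Oset] by (simp add: U_def)
  obtain k0 where k0: "\<forall>k\<ge>k0. val_ge (H (?P @ [fls_X ^ k]) - H (?P @ [0])) 0"
    using cont_at_snoc_X_power[OF H_cont_0 H_mem] by blast
  define a where "a = k0 + 1"
  have "val_ge (H (?P @ [fls_X ^ (2*a)]) - H (?P @ [fls_X ^ (2*(a+1))])) 0"
    using val_ge_diff[OF k0[rule_format, of "2*a"] k0[rule_format, of "2*(a+1)"]] a_def by simp
  moreover have "- int a < 0" by (simp add: a_def)
  ultimately have "(H (?P @ [fls_X ^ (2*a)]) - H (?P @ [fls_X ^ (2*(a+1))])) $$ (- int a) = 0"
    unfolding val_ge_def by blast
  then show False using H_X[of a "- int a"] H_X[of "a+1" "- int a"] by simp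
qed

lemma not_BGN2_f32: "\<not> BGN 2 1 {[x] | x. x \<in> (Oset :: 'a::{field,finite} fls set)} (\<lambda>p. f32 (hd p))"
proof
  define U where "U = {[x] | x. x \<in> (Oset :: 'a fls set)}"
  define G where "G = g1 1 U (\<lambda>p. f32 (hd p))"
  assume "BGN 2 1 {[x] | x. x \<in> (Oset :: 'a fls set)} (\<lambda>p. f32 (hd p))"
  then have "BGN1 1 U (\<lambda>p. f32 (hd p))" "BGN1 3 (U1 1 U) G"
    by (simp_all add: numeral_2_eq_2 numeral_3_eq_3 U_def G_def)
  then have G: "contin_on (U1 1 U) G" "\<forall>p\<in>U1o 1 U. G p = diffq 1 (\<lambda>p. f32 (hd p)) p"
    and "\<exists>H. contin_on (U1 3 (U1 1 U)) H \<and> (\<forall>p\<in>U1o 3 (U1 1 U). H p = diffq 3 G p)"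
    using has_cont_ext_cont_ext unfolding BGN1_def g1_def G_def has_cont_ext_def by blast+
  then show False using BGN2_f32_ext_discontinuous[OF G[unfolded U_def]] unfolding U_def by blast
qed

theorem theorem3p7:
  shows "Lud_inf (Oset :: 'a::{field,finite} fls set) f32 \<and>
         \<not> BGN 2 1 {[x] | x. x \<in> (Oset :: 'a fls set)} (\<lambda>p. f32 (hd p))"
  using Lud_inf_Oset_additive[OF additive_f32 contin_on_f32_hd contin_on_dquot_f32] not_BGN2_f32
  by blast

end
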